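(* Let $q$ be an odd prime power, $m\geq 2$ and $n=\frac{q^m+1}{2}$. Let $\delta$ be an integer with $2\leq\delta\leq\frac{q^{m/2}+3}{2}$ if $m\geq 4$ is even, and $2\leq\delta\leq\frac{q^{(m+1)/2}-q+2}{2}$ if $m\geq 3$ is odd. Then the negacyclic BCH code $\mathcal{C}_{(q,n,\delta,0)}$ has parameters $$\left[n,\ n-2m\left\lceil\frac{(2\delta-3)(q-1)}{2q}\right\rceil,\ d\right]$$ and generator polynomial $$g(x)=\prod_{\substack{0\leq i\leq\delta-2\\ i\not\equiv\frac{q-1}{2}\pmod q}}\mathbb{M}_{\beta^{1+2i}}(x),$$ where $d\geq 2\delta+1$ if $\delta\equiv\frac{q+1}{2}\pmod q$, and $d\geq 2\delta-1$ otherwise.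
   Context: Let $q$ be an odd prime power and $n$ a positive integer with $\gcd(n,q)=1$. Let $\ell$ be the order of $q$ modulo $2n$, $\alpha$ a primitive element of $\mathrm{GF}(q^\ell)$ and $\beta=\alpha^{(q^\ell-1)/(2n)}$, a primitive $2n$-th root of unity. $\mathbb{M}_{\beta^{j}}(x)$ is the minimal polynomial of $\beta^{j}$ over $\mathrm{GF}(q)$. For $2\leq\delta\leq n$, $\mathcal{C}_{(q,n,\delta,0)}$ is the negacyclic code of length $n$ over $\mathrm{GF}(q)$ (ideal of $\mathrm{GF}(q)[x]/(x^n+1)$) generated by $\mathrm{lcm}\big(\mathbb{M}_{\beta^{1}}(x),\mathbb{M}_{\beta^{3}}(x),\ldots,\mathbb{M}_{\beta^{1+2(\delta-2)}}(x)\big)$. Parameters $[n,k,d]$ are length, dimension, minimum Hamming distance. *)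

theory Defs
  imports "HOL-Computational_Algebra.Computational_Algebra" "HOL-Number_Theory.Number_Theory"
begin

text \<open>GF(q) is a finite field type 'a; GF(q^l) is a finite field type 'b together with a
  field embedding phi :: 'a => 'b (a ring homomorphism 1 |-> 1).\<close>

definition ring_embedding :: "('a::field \<Rightarrow> 'b::field) \<Rightarrow> bool" where
  "ring_embedding phi \<longleftrightarrow> phi 1 = 1 \<and> (\<forall>x y. phi (x + y) = phi x + phi y) \<and>
     (\<forall>x y. phi (x * y) = phi x * phi y)"

definition minpoly :: "('a::field \<Rightarrow> 'b::field) \<Rightarrow> 'b \<Rightarrow> 'a poly" where
  "minpoly phi b = (THE p. lead_coeff p = 1 \<and> poly (map_poly phi p) b = 0 \<and>
      (\<forall>r. r \<noteq> 0 \<and> poly (map_poly phi r) b = 0 \<longrightarrow> degree p \<le> degree r))"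

definition primitive_element :: "'b::{finite,field} \<Rightarrow> bool" where
  "primitive_element a \<longleftrightarrow> a \<noteq> 0 \<and> (\<forall>k. 0 < k \<and> k < card (UNIV :: 'b set) - 1 \<longrightarrow> a ^ k \<noteq> 1)"

text \<open>The negacyclic code of length n generated by g: the ideal generated by g in
  F[x]/(x^n+1), elements represented by their reduced representatives (degree < n).\<close>
definition negacyclic_code :: "nat \<Rightarrow> 'a::field poly \<Rightarrow> 'a poly set" where
  "negacyclic_code n g = {(f * g) mod ([:0, 1:] ^ n + 1) | f. True}"

text \<open>The negacyclic BCH code C_(q,n,delta,0) w.r.t. beta (a primitive 2n-th root of unity).\<close>
definition bch_generator :: "('a::field_gcd \<Rightarrow> 'b::field) \<Rightarrow> 'b \<Rightarrow> nat \<Rightarrow> 'a poly" where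
  "bch_generator phi beta delta = Lcm ((\<lambda>i. minpoly phi (beta ^ (1 + 2 * i))) ` {0..delta - 2})"

definition negacyclic_bch :: "('a::field_gcd \<Rightarrow> 'b::field) \<Rightarrow> 'b \<Rightarrow> nat \<Rightarrow> nat \<Rightarrow> 'a poly set" where
  "negacyclic_bch phi beta n delta = negacyclic_code n (bch_generator phi beta delta)"

definition hamming_dist :: "nat \<Rightarrow> 'a::zero poly \<Rightarrow> 'a poly \<Rightarrow> nat" where
  "hamming_dist n c1 c2 = card {i. i < n \<and> Polynomial.coeff c1 i \<noteq> Polynomial.coeff c2 i}"

definition min_dist :: "nat \<Rightarrow> 'a::zero poly set \<Rightarrow> nat" where
  "min_dist n C = Min {hamming_dist n c1 c2 | c1 c2. c1 \<in> C \<and> c2 \<in> C \<and> c1 \<noteq> c2}"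

definition code_dim :: "'a::field poly set \<Rightarrow> nat" where
  "code_dim C = vector_space.dim (Polynomial.smult :: 'a \<Rightarrow> 'a poly \<Rightarrow> 'a poly) C"

end

theory Submission
  imports Defs
begin

lemma map_poly_add_hom:
  assumes "f 0 = 0" "\<And>x y. f (x + y) = f x + f y"
  shows "map_poly f (p + r) = map_poly f p + map_poly f r"
  by (rule poly_eqI) (simp add: coeff_map_poly assms)

lemma map_poly_mult_hom:
  fixes f :: "'x::comm_semiring_1 \<Rightarrow> 'y::comm_semiring_1"
  assumes "f 0 = 0" "\<And>x y. f (x + y) = f x + f y" "\<And>x y. f (x * y) = f x * f y"
  shows "map_poly f (p * r) = map_poly f p * map_poly f r"
proof (rule poly_eqI)
  fix i
  have "f (\<Sum>j\<le>i. Polynomial.coeff p j * Polynomial.coeff r (i - j))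
      = (\<Sum>j\<le>i. f (Polynomial.coeff p j) * f (Polynomial.coeff r (i - j)))"
    by (simp add: assms(3) flip: sum_comp_morphism[of f, OF assms(1,2)])
  then show "Polynomial.coeff (map_poly f (p * r)) i = Polynomial.coeff (map_poly f p * map_poly f r) i"
    by (simp add: coeff_map_poly coeff_mult assms(1))
qed

lemma map_poly_prod_hom:
  fixes f :: "'x::comm_semiring_1 \<Rightarrow> 'y::comm_semiring_1"
  assumes "f 0 = 0" "\<And>x y. f (x + y) = f x + f y" "\<And>x y. f (x * y) = f x * f y" "f 1 = 1"
  shows "map_poly f (prod g A) = (\<Prod>a\<in>A. map_poly f (g a))"
proof (induction A rule: infinite_finite_induct)
  case (insert a A)
  then show ?case
    by (simp add: map_poly_mult_hom[of f, OF assms(1-3)])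
qed (simp_all add: assms(4))

lemma power_add_eq_if_binomials_vanish:
  fixes x y :: "'r::comm_semiring_1"
  assumes "n > 0" and binomials: "\<And>k. 0 < k \<Longrightarrow> k < n \<Longrightarrow> of_nat (n choose k) = (0::'r)"
  shows "(x + y) ^ n = x ^ n + y ^ n"
proof -
  have "(x + y) ^ n = (\<Sum>k\<le>n. of_nat (n choose k) * x ^ k * y ^ (n - k))"
    by (rule binomial_ring)
  also have "\<dots> = (\<Sum>k\<in>{0, n}. of_nat (n choose k) * x ^ k * y ^ (n - k))"
    by (rule sum.mono_neutral_right) (auto simp: binomials)
  finally show ?thesis
    using \<open>n > 0\<close> by (simp add: add.commute)
qed

lemma card_UNIV_field_ge_2: "2 \<le> card (UNIV :: 'c::{finite,field} set)"
proof -
  have "card {0::'c, 1} \<le> card (UNIV :: 'c set)"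
    by (rule card_mono) auto
  then show ?thesis
    by simp
qed

lemma power_card_eq_self:
  fixes x :: "'c::{finite,field}"
  shows "x ^ card (UNIV :: 'c set) = x"
proof (cases "x = 0")
  case False
  define U where "U = UNIV - {0 :: 'c}"
  have "(\<Prod>y\<in>U. x * y) = \<Prod>U"
    unfolding U_def
    by (rule prod.reindex_bij_witness[of _ "\<lambda>y. y / x" "\<lambda>y. x * y"]) (use False in auto)
  then have "x ^ card U * \<Prod>U = 1 * \<Prod>U"
    by (simp add: prod.distrib)
  moreover have "\<Prod>U \<noteq> 0"
    by (simp add: U_def)
  ultimately have "x ^ card U = 1"
    by (metis mult_cancel_right)
  moreover have "card (UNIV :: 'c set) = Suc (card U)"
    unfolding U_def using card_Suc_Diff1[of UNIV "0::'c"] by simp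
  ultimately show ?thesis
    by (simp only: power_Suc) simp
qed (simp add: finite_UNIV_card_ge_0)

text \<open>The polynomial \<open>(1 + X)\<^sup>Q - X\<^sup>Q - 1\<close> has degree below \<open>Q = card UNIV\<close> but
  vanishes on all \<open>Q\<close> elements of the field, so all its coefficients vanish.\<close>
lemma of_nat_card_choose_eq_0:
  assumes "0 < k" "k < card (UNIV :: 'c::{finite,field} set)"
  shows "(of_nat (card (UNIV :: 'c set) choose k) :: 'c) = 0"
proof -
  define Q where "Q = card (UNIV :: 'c set)"
  have "Q > 0"
    by (simp add: Q_def finite_UNIV_card_ge_0)
  define D :: "'c poly" where "D = [:1, 1:] ^ Q - Polynomial.monom 1 Q - 1"
  have coeff_D: "Polynomial.coeff D i = (if i \<le> Q then of_nat (Q choose i) else 0)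
      - (if i = Q then 1 else 0) - (if i = 0 then 1 else 0)" for i
  proof (cases "i \<le> Q")
    case False
    have "degree ([:1, 1:] ^ Q :: 'c poly) = Q"
      using degree_linear_power[of "1::'c" Q] by simp
    then show ?thesis
      using False by (simp add: D_def coeff_eq_0)
  qed (simp add: D_def coeff_linear_poly_power)
  have "D = 0"
  proof (rule poly_eqI_degree[where A = UNIV])
    show "poly D x = poly 0 x" for x
      by (simp add: D_def poly_monom Q_def power_card_eq_self)
    have "Polynomial.coeff D j = 0" if "j \<ge> Q" for j
      using that \<open>Q > 0\<close> by (simp add: coeff_D)
    then show "degree D < card (UNIV :: 'c set)"
      using \<open>Q > 0\<close> unfolding Q_def by (simp add: degree_lessI)
  qed (simp add: finite_UNIV_card_ge_0)
  then have "Polynomial.coeff D k = 0"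
    by simp
  then show ?thesis
    using assms by (simp add: coeff_D Q_def)
qed

locale finite_field_embedding =
  fixes phi :: "'a::{finite,field_gcd} \<Rightarrow> 'b::{finite,field}" and q :: nat
  assumes ring_embedding: "ring_embedding phi" and q_def: "q = card (UNIV :: 'a set)"
begin

lemma phi_add: "phi (x + y) = phi x + phi y"
  and phi_mult: "phi (x * y) = phi x * phi y"
  and phi_1: "phi 1 = 1"
  using ring_embedding unfolding ring_embedding_def by auto

lemma phi_0: "phi 0 = 0"
  using phi_add[of 0 0] by (metis add.right_neutral add_left_cancel)

lemma phi_diff: "phi (x - y) = phi x - phi y"
  using phi_add[of "x - y" y] by (simp add: eq_diff_eq)

lemma phi_eq_0_iff: "phi x = 0 \<longleftrightarrow> x = 0"
  by (metis phi_0 phi_1 phi_mult right_inverse mult_zero_left zero_neq_one)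

lemma inj_phi: "inj phi"
  by (rule injI) (metis phi_diff phi_eq_0_iff right_minus_eq)

lemma phi_of_nat: "phi (of_nat k) = of_nat k"
  by (induction k) (simp_all add: phi_0 phi_add phi_1)

lemma map_poly_phi_add: "map_poly phi (p + r) = map_poly phi p + map_poly phi r"
  by (rule map_poly_add_hom) (simp_all add: phi_0 phi_add)

lemma map_poly_phi_mult: "map_poly phi (p * r) = map_poly phi p * map_poly phi r"
  by (rule map_poly_mult_hom) (simp_all add: phi_0 phi_add phi_mult)

lemma map_poly_phi_power: "map_poly phi (p ^ k) = map_poly phi p ^ k"
  by (induction k) (simp_all add: map_poly_phi_mult phi_1)

lemma coeff_map_poly_phi: "Polynomial.coeff (map_poly phi p) i = phi (Polynomial.coeff p i)"
  by (simp add: coeff_map_poly phi_0)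

lemma degree_map_poly_phi: "degree (map_poly phi p) = degree p"
  by (rule degree_map_poly) (simp add: phi_eq_0_iff)

lemma map_poly_phi_eq_0_iff: "map_poly phi p = 0 \<longleftrightarrow> p = 0"
  by (simp add: map_poly_eq_0_iff phi_0 phi_eq_0_iff)

lemma inj_map_poly_phi: "inj (map_poly phi)"
  by (rule injI, rule poly_eqI) (metis coeff_map_poly_phi injD inj_phi)

lemma q_gt_1: "q > 1"
  using card_UNIV_field_ge_2[where 'c = 'a] by (simp add: q_def)

lemma power_q_add: "(x + y :: 'b) ^ q = x ^ q + y ^ q"
proof (rule power_add_eq_if_binomials_vanish)
  fix k assume "0 < k" "k < q"
  then have "(of_nat (q choose k) :: 'b) = phi 0"
    by (simp add: q_def of_nat_card_choose_eq_0 flip: phi_of_nat)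
  then show "(of_nat (q choose k) :: 'b) = 0"
    by (simp add: phi_0)
qed (use q_gt_1 in simp)

lemma power_q_sum: "(sum f A :: 'b) ^ q = (\<Sum>a\<in>A. f a ^ q)"
  by (induction A rule: infinite_finite_induct) (use q_gt_1 in \<open>auto simp: power_q_add\<close>)

lemma power_q_minus: "(- x :: 'b) ^ q = - (x ^ q)"
proof -
  have "x ^ q + (- x) ^ q = 0"
    using power_q_add[of x "- x"] q_gt_1 by (simp add: power_0_left)
  then show ?thesis
    by (simp add: eq_neg_iff_add_eq_0 add.commute)
qed

lemma inj_power_q: "inj (\<lambda>x :: 'b. x ^ q)"
proof (rule injI)
  fix x y :: 'b assume "x ^ q = y ^ q"
  then have "(x - y) ^ q = 0"
    using power_q_add[of x "- y"] by (simp add: power_q_minus)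
  then show "x = y"
    by simp
qed

lemma phi_power_q: "phi a ^ q = phi a"
proof -
  have "phi a ^ q = phi (a ^ q)"
    by (induction q) (simp_all add: phi_1 phi_mult)
  then show ?thesis
    by (simp add: q_def power_card_eq_self)
qed

text \<open>The fixed points of \<open>x \<mapsto> x\<^sup>q\<close> are roots of \<open>X\<^sup>q - X\<close>, so there are at most \<open>q\<close>
  of them, and the \<open>q\<close> elements of the image of \<open>phi\<close> are among them.\<close>
lemma power_q_eq_self_iff: "(y :: 'b) ^ q = y \<longleftrightarrow> y \<in> range phi"
proof
  assume "y ^ q = y"
  define P :: "'b poly" where "P = Polynomial.monom 1 q - Polynomial.monom 1 1"
  have "Polynomial.coeff P q = 1"
    using q_gt_1 by (simp add: P_def)
  then have "P \<noteq> 0"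
    by auto
  have "degree P \<le> q"
    unfolding P_def using q_gt_1
    by (intro order.trans[OF degree_diff_le_max]) (auto simp: degree_monom_eq)
  have "card {z::'b. z ^ q = z} \<le> q"
    using card_poly_roots_bound[OF \<open>P \<noteq> 0\<close>] \<open>degree P \<le> q\<close> by (simp add: P_def poly_monom)
  moreover have sub: "range phi \<subseteq> {z. z ^ q = z}"
    using phi_power_q by auto
  moreover have "card (range phi) = q"
    using inj_phi q_def by (simp add: card_image)
  ultimately have "card (range phi) = card {z::'b. z ^ q = z}"
    using card_mono[OF _ sub] by simp
  then have "range phi = {z. z ^ q = z}"
    using card_subset_eq[OF _ sub] by simp
  then show "y \<in> range phi"
    using \<open>y ^ q = y\<close> by auto
qed (use phi_power_q in auto)

lemma poly_map_poly_phi_power_q: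
  "poly (map_poly phi f) (b ^ q) = poly (map_poly phi f) b ^ q"
proof -
  have "poly (map_poly phi f) b ^ q = (\<Sum>i\<le>degree f. (phi (Polynomial.coeff f i) * b ^ i) ^ q)"
    by (simp add: poly_altdef degree_map_poly_phi coeff_map_poly_phi power_q_sum)
  also have "\<dots> = (\<Sum>i\<le>degree f. phi (Polynomial.coeff f i) * (b ^ q) ^ i)"
    by (simp add: power_mult_distrib phi_power_q mult.commute flip: power_mult)
  also have "\<dots> = poly (map_poly phi f) (b ^ q)"
    by (simp add: poly_altdef degree_map_poly_phi coeff_map_poly_phi)
  finally show ?thesis
    by simp
qed

lemma poly_map_poly_phi_power_q_power:
  assumes "poly (map_poly phi f) b = 0"
  shows "poly (map_poly phi f) (b ^ (q ^ k)) = 0"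
proof (induction k)
  case (Suc k)
  have "b ^ (q ^ Suc k) = (b ^ (q ^ k)) ^ q"
    by (simp only: power_Suc2 power_mult)
  then show ?case
    using Suc q_gt_1 by (simp add: poly_map_poly_phi_power_q)
qed (use assms in simp)

end

context finite_field_embedding
begin

definition frob_orbit :: "'b \<Rightarrow> 'b set" where
  "frob_orbit b = range (\<lambda>k. b ^ (q ^ k))"

definition orbit_poly :: "'b \<Rightarrow> 'b poly" where
  "orbit_poly b = (\<Prod>c\<in>frob_orbit b. [:- c, 1:])"

lemma self_in_frob_orbit: "b \<in> frob_orbit b"
  unfolding frob_orbit_def by (rule range_eqI[of _ _ 0]) simp

lemma power_q_in_frob_orbit:
  assumes "c \<in> frob_orbit b"
  shows "c ^ q \<in> frob_orbit b"
proof -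
  obtain k where "c = b ^ (q ^ k)"
    using assms by (auto simp: frob_orbit_def)
  then have "c ^ q = b ^ (q ^ Suc k)"
    by (simp only: power_Suc2 power_mult)
  then show ?thesis
    unfolding frob_orbit_def by (rule range_eqI)
qed

lemma frob_orbit_subset:
  assumes "c \<in> frob_orbit b"
  shows "frob_orbit c \<subseteq> frob_orbit b"
proof
  fix z assume "z \<in> frob_orbit c"
  moreover obtain k where "c = b ^ (q ^ k)"
    using assms by (auto simp: frob_orbit_def)
  ultimately obtain j where "z = b ^ (q ^ (k + j))"
    by (auto simp: frob_orbit_def power_add power_mult)
  then show "z \<in> frob_orbit b"
    unfolding frob_orbit_def by (rule range_eqI)
qed

lemma power_q_image_frob_orbit: "(\<lambda>c. c ^ q) ` frob_orbit b = frob_orbit b"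
  by (rule endo_inj_surj) (auto simp: power_q_in_frob_orbit inj_on_subset[OF inj_power_q])

text \<open>Since Frobenius permutes the finite orbit, the orbit is a cycle through \<open>b\<close>.\<close>
lemma frob_orbit_power_q: "frob_orbit (b ^ q) = frob_orbit b"
proof
  have "b \<in> (\<lambda>c. c ^ q) ` frob_orbit b"
    by (simp only: power_q_image_frob_orbit self_in_frob_orbit)
  then obtain k where "b = (b ^ (q ^ k)) ^ q"
    unfolding frob_orbit_def image_image by blast
  then have "b = (b ^ q) ^ (q ^ k)"
    by (simp flip: power_mult add: mult.commute)
  then have "b \<in> frob_orbit (b ^ q)"
    unfolding frob_orbit_def by (rule range_eqI)
  then show "frob_orbit b \<subseteq> frob_orbit (b ^ q)"
    by (rule frob_orbit_subset)
  show "frob_orbit (b ^ q) \<subseteq> frob_orbit b"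
    by (rule frob_orbit_subset[OF power_q_in_frob_orbit[OF self_in_frob_orbit]])
qed

lemma poly_orbit_poly_eq_0_iff: "poly (orbit_poly b) z = 0 \<longleftrightarrow> z \<in> frob_orbit b"
  by (simp add: orbit_poly_def poly_prod)

lemma degree_orbit_poly: "degree (orbit_poly b) = card (frob_orbit b)"
  unfolding orbit_poly_def by (subst degree_prod_sum_eq) auto

lemma lead_coeff_orbit_poly: "lead_coeff (orbit_poly b) = 1"
  unfolding orbit_poly_def by (simp add: lead_coeff_prod)

lemma map_poly_power_q_orbit_poly: "map_poly (\<lambda>x. x ^ q) (orbit_poly b) = orbit_poly b"
proof -
  have "map_poly (\<lambda>x. x ^ q) (orbit_poly b) = (\<Prod>c\<in>frob_orbit b. [:- (c ^ q), 1:])"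
    unfolding orbit_poly_def using q_gt_1
    by (subst map_poly_prod_hom)
      (simp_all add: power_q_add power_mult_distrib power_q_minus map_poly_pCons power_0_left)
  also have "\<dots> = (\<Prod>c\<in>(\<lambda>c. c ^ q) ` frob_orbit b. [:- c, 1:])"
    by (subst prod.reindex) (auto simp: inj_on_subset[OF inj_power_q])
  also have "\<dots> = orbit_poly b"
    by (simp add: power_q_image_frob_orbit orbit_poly_def)
  finally show ?thesis .
qed

lemma coeff_orbit_poly_in_range: "Polynomial.coeff (orbit_poly b) i \<in> range phi"
proof -
  have "Polynomial.coeff (orbit_poly b) i ^ q = Polynomial.coeff (orbit_poly b) i"
    using arg_cong[OF map_poly_power_q_orbit_poly, of "\<lambda>p. Polynomial.coeff p i" b] q_gt_1
    by (simp add: coeff_map_poly power_0_left)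
  then show ?thesis
    using power_q_eq_self_iff by blast
qed

lemma card_frob_orbit_le_degree:
  assumes "r \<noteq> 0" "poly (map_poly phi r) b = 0"
  shows "card (frob_orbit b) \<le> degree r"
proof -
  have "card (frob_orbit b) \<le> card {z. poly (map_poly phi r) z = 0}"
    using poly_map_poly_phi_power_q_power[OF assms(2)] by (intro card_mono) (auto simp: frob_orbit_def)
  also have "\<dots> \<le> degree r"
    using card_poly_roots_bound[of "map_poly phi r"] assms(1)
    by (simp add: map_poly_phi_eq_0_iff degree_map_poly_phi)
  finally show ?thesis .
qed

lemma map_poly_phi_inv_orbit_poly:
  "map_poly phi (map_poly (inv_into UNIV phi) (orbit_poly b)) = orbit_poly b"
proof -
  have "inv_into UNIV phi 0 = 0"
    by (metis phi_0 inv_f_f inj_phi)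
  then show ?thesis
    by (intro poly_eqI)
      (simp add: coeff_map_poly_phi coeff_map_poly f_inv_into_f[OF coeff_orbit_poly_in_range])
qed

lemma map_poly_phi_eq_orbit_poly:
  assumes "lead_coeff p = 1" "degree p = card (frob_orbit b)" "poly (map_poly phi p) b = 0"
  shows "map_poly phi p = orbit_poly b"
proof (rule poly_eqI_degree_lead_coeff[where n = "card (frob_orbit b)" and A = "frob_orbit b"])
  show "Polynomial.coeff (map_poly phi p) (card (frob_orbit b))
      = Polynomial.coeff (orbit_poly b) (card (frob_orbit b))"
    using assms(1,2) lead_coeff_orbit_poly[of b] degree_orbit_poly[of b]
    by (simp add: coeff_map_poly_phi phi_1)
  show "poly (map_poly phi p) z = poly (orbit_poly b) z" if "z \<in> frob_orbit b" for z
    using that assms(3) poly_map_poly_phi_power_q_power poly_orbit_poly_eq_0_iff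
    by (auto simp: frob_orbit_def)
qed (simp_all add: assms(2) degree_map_poly_phi degree_orbit_poly)

lemma map_poly_phi_minpoly: "map_poly phi (minpoly phi b) = orbit_poly b"
proof -
  define p where "p = map_poly (inv_into UNIV phi) (orbit_poly b)"
  have map_p: "map_poly phi p = orbit_poly b"
    unfolding p_def by (rule map_poly_phi_inv_orbit_poly)
  then have degree_p: "degree p = card (frob_orbit b)"
    by (metis degree_map_poly_phi degree_orbit_poly)
  have "phi (lead_coeff p) = phi 1"
    by (metis map_p coeff_map_poly_phi degree_map_poly_phi lead_coeff_orbit_poly phi_1)
  then have lead_p: "lead_coeff p = 1"
    by (rule injD[OF inj_phi])
  have root_p: "poly (map_poly phi p) b = 0"
    by (simp add: map_p poly_orbit_poly_eq_0_iff self_in_frob_orbit)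
  have "minpoly phi b = p"
    unfolding minpoly_def
  proof (rule the_equality)
    show "lead_coeff p = 1 \<and> poly (map_poly phi p) b = 0 \<and>
        (\<forall>r. r \<noteq> 0 \<and> poly (map_poly phi r) b = 0 \<longrightarrow> degree p \<le> degree r)"
      using lead_p root_p card_frob_orbit_le_degree by (simp add: degree_p)
  next
    fix p' assume p': "lead_coeff p' = 1 \<and> poly (map_poly phi p') b = 0 \<and>
        (\<forall>r. r \<noteq> 0 \<and> poly (map_poly phi r) b = 0 \<longrightarrow> degree p' \<le> degree r)"
    moreover have "p \<noteq> 0"
      using lead_p by auto
    ultimately have "p' \<noteq> 0" "degree p' \<le> degree p"
      using root_p by auto
    then have "degree p' = card (frob_orbit b)"
      using p' card_frob_orbit_le_degree[of p' b] by (simp add: degree_p)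
    then have "map_poly phi p' = map_poly phi p"
      using map_poly_phi_eq_orbit_poly p' map_p by simp
    then show "p' = p"
      by (rule injD[OF inj_map_poly_phi])
  qed
  then show ?thesis
    using map_p by simp
qed

lemma degree_minpoly: "degree (minpoly phi b) = card (frob_orbit b)"
  by (metis degree_map_poly_phi degree_orbit_poly map_poly_phi_minpoly)

lemma lead_coeff_minpoly: "lead_coeff (minpoly phi b) = 1"
  by (metis lead_coeff_orbit_poly map_poly_phi_minpoly coeff_map_poly_phi degree_map_poly_phi
      phi_1 inj_phi injD)

lemma minpoly_ne_0: "minpoly phi b \<noteq> 0"
  using lead_coeff_minpoly[of b] by auto

lemma poly_minpoly_eq_0_iff: "poly (map_poly phi (minpoly phi b)) z = 0 \<longleftrightarrow> z \<in> frob_orbit b"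
  by (simp add: map_poly_phi_minpoly poly_orbit_poly_eq_0_iff)

lemma minpoly_dvd:
  assumes "poly (map_poly phi r) b = 0"
  shows "minpoly phi b dvd r"
proof -
  let ?p = "minpoly phi b"
  have "map_poly phi r = map_poly phi (r div ?p) * map_poly phi ?p + map_poly phi (r mod ?p)"
    by (metis div_mult_mod_eq map_poly_phi_add map_poly_phi_mult)
  then have "poly (map_poly phi (r mod ?p)) b = 0"
    using assms poly_minpoly_eq_0_iff[of b b] self_in_frob_orbit[of b] by simp
  have "r mod ?p = 0"
  proof (rule ccontr)
    assume "r mod ?p \<noteq> 0"
    then have "card (frob_orbit b) \<le> degree (r mod ?p)" "degree (r mod ?p) < degree ?p"
      using card_frob_orbit_le_degree \<open>poly (map_poly phi (r mod ?p)) b = 0\<close> degree_mod_less'[OF minpoly_ne_0] by auto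
    then show False
      by (simp add: degree_minpoly)
  qed
  then show ?thesis
    by (simp add: mod_0_imp_dvd)
qed

lemma prime_minpoly: "prime (minpoly phi b)"
proof (rule primeI)
  have "\<not> is_unit (minpoly phi b)"
    using is_unit_iff_degree[OF minpoly_ne_0] degree_minpoly[of b] self_in_frob_orbit[of b]
    by (metis card_0_eq empty_iff finite)
  moreover have "minpoly phi b dvd r \<or> minpoly phi b dvd s" if "minpoly phi b dvd r * s" for r s
  proof -
    have "poly (map_poly phi (r * s)) b = 0"
      using that poly_minpoly_eq_0_iff self_in_frob_orbit
      by (metis dvd_def map_poly_phi_mult mult_zero_left poly_mult)
    then show ?thesis
      by (auto simp: map_poly_phi_mult intro: minpoly_dvd)
  qed
  ultimately show "prime_elem (minpoly phi b)"
    by (intro prime_elemI minpoly_ne_0) auto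
  show "normalize (minpoly phi b) = minpoly phi b"
    using lead_coeff_minpoly[of b] by (simp add: normalize_poly_def one_pCons[symmetric])
qed

lemma minpoly_eq_iff: "minpoly phi b = minpoly phi c \<longleftrightarrow> frob_orbit b = frob_orbit c"
proof
  have "frob_orbit z = {y. poly (map_poly phi (minpoly phi z)) y = 0}" for z
    by (simp add: poly_minpoly_eq_0_iff)
  then show "minpoly phi b = minpoly phi c \<Longrightarrow> frob_orbit b = frob_orbit c"
    by simp
  assume "frob_orbit b = frob_orbit c"
  then have "map_poly phi (minpoly phi b) = map_poly phi (minpoly phi c)"
    by (simp add: map_poly_phi_minpoly orbit_poly_def)
  then show "minpoly phi b = minpoly phi c"
    by (rule injD[OF inj_map_poly_phi])
qed

lemma minpoly_power_q: "minpoly phi (b ^ q) = minpoly phi b"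
  by (simp add: minpoly_eq_iff frob_orbit_power_q)

end

definition coset_bound :: "nat \<Rightarrow> nat \<Rightarrow> nat \<Rightarrow> bool" where
  "coset_bound q m T \<longleftrightarrow>
     (even m \<and> 4 \<le> m \<and> T \<le> q ^ (m div 2)) \<or> (odd m \<and> 3 \<le> m \<and> T + q + 1 \<le> q ^ ((m + 1) div 2))"

lemma coset_boundE:
  assumes "coset_bound q m T"
  obtains (even) M where "m = 2 * M" "2 \<le> M" "T \<le> q ^ M"
    | (odd) M where "m = 2 * M + 1" "1 \<le> M" "T + q + 1 \<le> q ^ (M + 1)"
proof -
  define M where "M = m div 2"
  have "even m \<Longrightarrow> m = 2 * M" "odd m \<Longrightarrow> m = 2 * M + 1" "odd m \<Longrightarrow> (m + 1) div 2 = M + 1"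
    unfolding M_def by presburger+
  then show ?thesis
    using assms that unfolding coset_bound_def by (cases "even m") auto
qed

lemma coset_bound_mult_le:
  assumes "coset_bound q m T" "1 \<le> q" "2 * k \<le> m" "s \<le> T"
  shows "s * q ^ k \<le> q ^ m"
  using assms(1)
proof (cases rule: coset_boundE)
  case (even M)
  have "s * q ^ k \<le> q ^ M * q ^ M"
    using even assms by (intro mult_mono power_increasing) auto
  also have "\<dots> = q ^ m"
    using even(1) by (simp only: mult_2 power_add)
  finally show ?thesis .
next
  case (odd M)
  have "s * q ^ k \<le> q ^ (M + 1) * q ^ M"
    using odd assms by (intro mult_mono power_increasing) auto
  also have "\<dots> = q ^ (M + 1 + M)"
    by (simp only: power_add)
  also have "\<dots> = q ^ m"
    using odd(1) by (simp add: mult_2)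
  finally show ?thesis .
qed

lemma coset_bound_double_less:
  assumes "coset_bound q m T" "3 \<le> q"
  shows "2 * T < q ^ m + 1"
proof -
  have "2 \<le> m"
    using assms(1) by (auto simp: coset_bound_def)
  then have "T * q \<le> q ^ m"
    using assms coset_bound_mult_le[of q m T 1 T] by simp
  moreover have "2 * T \<le> T * q"
    using assms(2) by simp
  ultimately show ?thesis
    by linarith
qed

lemma shifted_sum_less_odd:
  fixes q s t T X :: nat
  assumes "T + q + 1 \<le> q * X" "q ^ k \<le> X" "s \<le> T" "t \<le> T"
  shows "s * q ^ k + t < q * X * X + 1"
proof -
  have "s * q ^ k + t \<le> T * X + T"
    using assms(2-4) mult_mono[of s T "q ^ k" X] by simp
  moreover have "(T + q + 1) * (X + 1) \<le> (q * X) * (X + 1)"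
    using assms(1) by (rule mult_right_mono) simp
  then have "T * X + T + q * X + q + X + 1 \<le> q * X * X + q * X"
    by (simp add: algebra_simps)
  ultimately show ?thesis
    by linarith
qed

lemma shifted_sum_less_even:
  fixes q s t T Y :: nat
  assumes "2 \<le> q" "1 \<le> Y" "T \<le> q * Y" "q ^ k \<le> Y" "s \<le> T" "t \<le> T"
  shows "s * q ^ k + t < (q * Y) * (q * Y) + 1"
proof -
  have "Y + 1 \<le> q * Y"
    using assms(1,2) mult_right_mono[of 2 q Y] by linarith
  have "s * q ^ k + t \<le> (q * Y) * Y + q * Y"
    using assms(3-6) mult_mono[of s "q * Y" "q ^ k" Y] by simp
  also have "\<dots> = (q * Y) * (Y + 1)"
    by (simp add: algebra_simps)
  also have "\<dots> \<le> (q * Y) * (q * Y)"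
    using \<open>Y + 1 \<le> q * Y\<close> by (rule mult_left_mono) simp
  finally show ?thesis
    by simp
qed

lemma shifted_sum_eq_square_imp:
  fixes s t X :: nat
  assumes "s \<le> X" "t \<le> X" "s * X + t = X * X + 1"
  shows "s = X"
proof (rule ccontr)
  assume "s \<noteq> X"
  then have "(s + 1) * X \<le> X * X"
    using assms(1) by (intro mult_right_mono) auto
  then show False
    using assms(2,3) by (simp add: algebra_simps)
qed

text \<open>The only way \<open>s q\<^sup>k + t\<close> can reach \<open>q\<^sup>m + 1\<close> within the bound is \<open>m = 2k\<close> and
  \<open>s = q\<^sup>k\<close>.\<close>
lemma shifted_sum_ne:
  assumes "coset_bound q m T" "3 \<le> q" "1 \<le> k" "2 * k \<le> m" "s \<le> T" "t \<le> T" "\<not> q dvd s"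
  shows "s * q ^ k + t \<noteq> q ^ m + 1"
  using assms(1)
proof (cases rule: coset_boundE)
  case (odd M)
  have "q ^ m = q * q ^ M * q ^ M"
    using odd(1) by (simp add: mult_2 power_add)
  moreover have "q ^ k \<le> q ^ M"
    using odd assms by (intro power_increasing) auto
  ultimately show ?thesis
    using shifted_sum_less_odd[of T q "q ^ M" k s t] odd(3) assms(5,6) by simp
next
  case (even M)
  have q_m: "q ^ m = q ^ M * q ^ M"
    using even(1) by (simp only: mult_2 power_add)
  show ?thesis
  proof (cases "k < M")
    case True
    have "q ^ M = q * q ^ (M - 1)"
      using even by (simp flip: power_Suc)
    moreover have "q ^ k \<le> q ^ (M - 1)"
      using True assms(2) by (intro power_increasing) auto
    ultimately show ?thesis
      using shifted_sum_less_even[of q "q ^ (M - 1)" T k s t] even(3) assms(2,5,6) q_m by simp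
  next
    case False
    then have "k = M"
      using assms even by auto
    moreover have "q dvd q ^ M"
      using even by simp
    ultimately show ?thesis
      using shifted_sum_eq_square_imp[of s "q ^ M" t] even(3) assms(5-7) q_m by auto
  qed
qed

lemma not_cong_shift:
  assumes "coset_bound q m T" "3 \<le> q" "2 * k \<le> m" "1 \<le> k" "s \<le> T" "t \<le> T" "\<not> q dvd t"
  shows "\<not> [s * q ^ k = t] (mod q ^ m + 1)"
proof
  assume "[s * q ^ k = t] (mod q ^ m + 1)"
  moreover have "s * q ^ k \<le> q ^ m"
    using coset_bound_mult_le[OF assms(1) _ assms(3,5)] assms(2) by simp
  moreover have "t \<le> q ^ m"
    using coset_bound_double_less[OF assms(1,2)] assms(6) by simp
  ultimately have "s * q ^ k = t"
    by (intro cong_less_imp_eq_nat) auto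
  moreover have "q dvd s * q ^ k"
    using assms(4) by simp
  ultimately show False
    using assms(7) by simp
qed

lemma not_cong_shift_add:
  assumes "coset_bound q m T" "3 \<le> q" "2 * k \<le> m" "1 \<le> k" "s \<le> T" "t \<le> T" "\<not> q dvd s"
  shows "\<not> [s * q ^ k + t = 0] (mod q ^ m + 1)"
proof
  assume "[s * q ^ k + t = 0] (mod q ^ m + 1)"
  then obtain j where j: "s * q ^ k + t = (q ^ m + 1) * j"
    by (auto simp: cong_0_iff)
  have "s * q ^ k \<le> q ^ m"
    using coset_bound_mult_le[OF assms(1) _ assms(3,5)] assms(2) by simp
  moreover have "t < q ^ m + 1"
    using coset_bound_double_less[OF assms(1,2)] assms(6) by simp
  moreover have "0 < s * q ^ k"
    using assms(2,7) by (auto intro!: Nat.gr0I)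
  ultimately have "0 < (q ^ m + 1) * j" "(q ^ m + 1) * j < (q ^ m + 1) * 2"
    unfolding j[symmetric] by simp_all
  then have "0 < j" "j < 2"
    by (simp_all only: mult_less_cancel1 nat_0_less_mult_iff)
  then have "j = 1"
    by simp
  then show False
    using j shifted_sum_ne[OF assms(1,2,4,3,5,6,7)] by simp
qed

lemma mult_power_add_self_cong_0:
  fixes s q :: nat
  shows "[s * q ^ m + s = 0] (mod q ^ m + 1)"
proof -
  have "s * q ^ m + s = (q ^ m + 1) * s"
    by (simp add: algebra_simps)
  then show ?thesis
    by (simp only: cong_0_iff dvd_triv_left)
qed

lemma power_cong_power_mod:
  fixes q :: nat
  shows "[q ^ k = q ^ (k mod (2 * m))] (mod q ^ m + 1)"
proof -
  have "[q ^ m * q ^ m + q ^ m = 1 + q ^ m] (mod q ^ m + 1)"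
    using mult_power_add_self_cong_0[of "q ^ m" q m] by (simp add: cong_def add.commute[of 1])
  then have "[q ^ m * q ^ m = 1] (mod q ^ m + 1)"
    by (rule iffD1[OF cong_add_rcancel_nat])
  then have "[q ^ (2 * m) = 1] (mod q ^ m + 1)"
    by (simp only: mult_2 power_add)
  then have "[(q ^ (2 * m)) ^ (k div (2 * m)) * q ^ (k mod (2 * m)) = q ^ (k mod (2 * m))] (mod q ^ m + 1)"
    using cong_mult[OF cong_pow cong_refl] by fastforce
  then show ?thesis
    by (simp flip: power_mult power_add)
qed

lemma not_cong_shift_below:
  assumes "coset_bound q m T" "3 \<le> q" "0 < r" "r < m" "s \<le> T" "t \<le> T"
    "\<not> q dvd s" "\<not> q dvd t"
  shows "\<not> [s * q ^ r = t] (mod q ^ m + 1)"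
proof
  assume cong: "[s * q ^ r = t] (mod q ^ m + 1)"
  show False
  proof (cases "2 * r \<le> m")
    case True
    then show False
      using not_cong_shift[OF assms(1,2) True _ assms(5,6,8)] assms(3) cong by simp
  next
    case False
    define r' where "r' = m - r"
    have "[s * q ^ r * q ^ r' = t * q ^ r'] (mod q ^ m + 1)"
      by (rule cong_mult[OF cong cong_refl])
    moreover have "s * q ^ r * q ^ r' = s * q ^ m"
      using assms(4) by (simp add: r'_def mult.assoc flip: power_add)
    ultimately have "[s * q ^ m + s = t * q ^ r' + s] (mod q ^ m + 1)"
      by (simp add: cong_add_rcancel_nat)
    then have "[t * q ^ r' + s = 0] (mod q ^ m + 1)"
      using cong_trans[OF cong_sym mult_power_add_self_cong_0] by blast
    moreover have "2 * r' \<le> m" "1 \<le> r'"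
      using False assms(4) by (auto simp: r'_def)
    ultimately show False
      using not_cong_shift_add[OF assms(1,2) _ _ assms(6,5,8)] by blast
  qed
qed

lemma not_cong_shift_add_below:
  assumes "coset_bound q m T" "3 \<le> q" "r < m" "s \<le> T" "t \<le> T" "\<not> q dvd s" "\<not> q dvd t"
  shows "\<not> [s * q ^ r + t = 0] (mod q ^ m + 1)"
proof
  assume cong: "[s * q ^ r + t = 0] (mod q ^ m + 1)"
  consider "r = 0" | "0 < r" "2 * r \<le> m" | "m < 2 * r"
    by linarith
  then show False
  proof cases
    case 1
    have "0 < s + t" "s + t < q ^ m + 1"
      using coset_bound_double_less[OF assms(1,2)] assms(4-6) by (auto intro!: Nat.gr0I)
    then show False
      using cong 1 by (auto simp: cong_0_iff dest!: dvd_imp_le)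
  next
    case 2
    then show False
      using not_cong_shift_add[OF assms(1,2) _ _ assms(4-6)] cong by simp
  next
    case 3
    define r' where "r' = m - r"
    have "[(s * q ^ r + t) * q ^ r' = 0 * q ^ r'] (mod q ^ m + 1)"
      by (rule cong_mult[OF cong cong_refl])
    moreover have "(s * q ^ r + t) * q ^ r' = s * q ^ m + t * q ^ r'"
      using assms(3) by (simp add: r'_def algebra_simps flip: power_add)
    ultimately have "[s * q ^ m + t * q ^ r' = 0] (mod q ^ m + 1)"
      by simp
    then have "[s * q ^ m + t * q ^ r' = s * q ^ m + s] (mod q ^ m + 1)"
      using cong_trans[OF _ cong_sym[OF mult_power_add_self_cong_0]] by blast
    then have "[t * q ^ r' = s] (mod q ^ m + 1)"
      by (simp add: cong_add_lcancel_nat)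
    moreover have "2 * r' \<le> m" "1 \<le> r'"
      using 3 assms(3) by (auto simp: r'_def)
    ultimately show False
      using not_cong_shift[OF assms(1,2) _ _ assms(5,4,6)] by blast
  qed
qed

text \<open>Under the bound, distinct admissible \<open>s, t\<close> lie in distinct \<open>q\<close>-cyclotomic cosets
  modulo \<open>q\<^sup>m + 1\<close>, each of size \<open>2m\<close>.\<close>
lemma cyclotomic_coset_cong:
  assumes "coset_bound q m T" "3 \<le> q" "s \<le> T" "t \<le> T" "\<not> q dvd s" "\<not> q dvd t"
    and cong: "[s * q ^ k = t] (mod q ^ m + 1)"
  shows "s = t \<and> 2 * m dvd k"
proof -
  define r where "r = k mod (2 * m)"
  have "0 < m"
    using assms(1) by (auto simp: coset_bound_def)
  then have "r < 2 * m"
    by (simp add: r_def)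
  have "[s * q ^ r = s * q ^ k] (mod q ^ m + 1)"
    unfolding r_def by (rule cong_sym, rule cong_mult[OF cong_refl power_cong_power_mod])
  then have "[s * q ^ r = t] (mod q ^ m + 1)"
    using cong by (rule cong_trans)
  show ?thesis
  proof (cases "r < m")
    case True
    then have "r = 0"
      using not_cong_shift_below[OF assms(1,2) _ True assms(3-6)] \<open>[s * q ^ r = t] (mod _)\<close>
      by (auto intro: Nat.gr0I)
    then have "[s = t] (mod q ^ m + 1)"
      using \<open>[s * q ^ r = t] (mod _)\<close> by simp
    moreover have "s < q ^ m + 1" "t < q ^ m + 1"
      using coset_bound_double_less[OF assms(1,2)] assms(3,4) by auto
    ultimately show ?thesis
      using \<open>r = 0\<close> by (auto simp: r_def cong_less_imp_eq_nat)
  next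
    case False
    define r0 where "r0 = r - m"
    have "r = m + r0" "r0 < m"
      using False \<open>r < 2 * m\<close> by (auto simp: r0_def)
    have "[s * q ^ r + s * q ^ r0 = 0] (mod q ^ m + 1)"
      using mult_power_add_self_cong_0[of "s * q ^ r0" q m] \<open>r = m + r0\<close>
      by (simp add: power_add mult_ac)
    moreover have "[s * q ^ r + s * q ^ r0 = t + s * q ^ r0] (mod q ^ m + 1)"
      using \<open>[s * q ^ r = t] (mod _)\<close> by (rule cong_add[OF _ cong_refl])
    ultimately have "[t + s * q ^ r0 = 0] (mod q ^ m + 1)"
      using cong_sym cong_trans by blast
    then have "[s * q ^ r0 + t = 0] (mod q ^ m + 1)"
      by (simp only: add.commute)
    then show ?thesis
      using not_cong_shift_add_below[OF assms(1,2) \<open>r0 < m\<close> assms(3-6)] by blast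
  qed
qed

lemma card_residue_avoiding:
  fixes q N :: nat
  assumes "odd q" "3 \<le> q"
  shows "card {i. i \<le> N \<and> i mod q \<noteq> (q - 1) div 2}
    = N div q * (q - 1) + N mod q + (if N mod q < (q - 1) div 2 then 1 else 0)"
proof (induction N)
  case 0
  have "{i. i \<le> 0 \<and> i mod q \<noteq> (q - 1) div 2} = {0}"
    using assms by auto
  then show ?case
    using assms by simp
next
  case (Suc N)
  define h where "h = (q - 1) div 2"
  have q: "q = 2 * h + 1" "0 < h"
    using assms unfolding h_def by presburger+
  have "{i. i \<le> Suc N \<and> i mod q \<noteq> h} =
      {i. i \<le> N \<and> i mod q \<noteq> h} \<union> (if Suc N mod q \<noteq> h then {Suc N} else {})"
    by (auto simp: le_Suc_eq)
  then have step: "card {i. i \<le> Suc N \<and> i mod q \<noteq> h}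
      = card {i. i \<le> N \<and> i mod q \<noteq> h} + (if Suc N mod q \<noteq> h then 1 else 0)"
    by (auto simp: card_insert_if)
  show ?case
  proof (cases "Suc (N mod q) = q")
    case True
    then have "Suc N mod q = 0" "Suc N div q = Suc (N div q)" "N mod q = q - 1"
      by (simp_all add: mod_Suc div_Suc)
    then show ?thesis
      using step Suc.IH q unfolding h_def[symmetric] by (auto simp: algebra_simps)
  next
    case False
    then have "Suc N mod q = Suc (N mod q)" "Suc N div q = N div q"
      by (simp_all add: mod_Suc div_Suc)
    then show ?thesis
      using step Suc.IH unfolding h_def[symmetric] by auto
  qed
qed

lemma card_residue_avoiding_bounds:
  fixes q N :: nat
  defines "c \<equiv> card {i. i \<le> N \<and> i mod q \<noteq> (q - 1) div 2}"
  assumes "odd q" "3 \<le> q"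
  shows "(2 * N + 1) * (q - 1) \<le> 2 * q * c" "2 * q * c < (2 * N + 1) * (q - 1) + 2 * q"
proof -
  define h where "h = (q - 1) div 2"
  define a where "a = N div q"
  define b where "b = N mod q"
  define e :: nat where "e = (if b < h then 1 else 0)"
  have q: "q = 2 * h + 1"
    using assms unfolding h_def by presburger
  have "b < q"
    unfolding b_def using assms by simp
  have N: "N = a * q + b"
    unfolding a_def b_def by simp
  have "c = a * (q - 1) + b + e"
    unfolding c_def a_def b_def e_def h_def using card_residue_avoiding[OF assms(2,3)] by simp
  then have "2 * q * c = 4 * a * h * q + 4 * h * b + 2 * b + 2 * q * e"
    using q by (simp add: algebra_simps)
  moreover have "(2 * N + 1) * (q - 1) = 4 * a * h * q + 4 * b * h + 2 * h"
    unfolding N using q by (simp add: algebra_simps)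
  ultimately show "(2 * N + 1) * (q - 1) \<le> 2 * q * c" "2 * q * c < (2 * N + 1) * (q - 1) + 2 * q"
    using \<open>b < q\<close> q unfolding e_def by (cases "b < h"; simp)+
qed

lemma card_residue_avoiding_eq_ceiling:
  fixes q N :: nat
  assumes "odd q" "3 \<le> q"
  shows "int (card {i. i \<le> N \<and> i mod q \<noteq> (q - 1) div 2})
    = \<lceil>real ((2 * N + 1) * (q - 1)) / real (2 * q)\<rceil>"
proof -
  let ?c = "card {i. i \<le> N \<and> i mod q \<noteq> (q - 1) div 2}"
  have "real ((2 * N + 1) * (q - 1)) \<le> real (2 * q) * real ?c"
    "real (2 * q) * real ?c < real ((2 * N + 1) * (q - 1)) + real (2 * q)"
    using card_residue_avoiding_bounds[OF assms, of N]
    by (simp_all only: of_nat_mult[symmetric] of_nat_add[symmetric] of_nat_le_iff of_nat_less_iff)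
  moreover have "real (2 * q) > 0"
    using assms by simp
  ultimately show ?thesis
    by (intro ceiling_unique[symmetric]) (simp_all add: divide_le_eq less_divide_eq algebra_simps)
qed

lemma dvd_one_add_two_mult_iff:
  fixes q i :: nat
  assumes "odd q"
  shows "q dvd 1 + 2 * i \<longleftrightarrow> i mod q = (q - 1) div 2"
proof -
  define b where "b = i mod q"
  have "0 < q"
    using assms by (rule odd_pos)
  then have "b < q"
    by (simp add: b_def)
  have "(1 + 2 * i) mod q = (1 + 2 * b) mod q"
    unfolding b_def by (metis mod_add_right_eq mod_mult_right_eq)
  then have "q dvd 1 + 2 * i \<longleftrightarrow> q dvd 1 + 2 * b"
    by (simp add: mod_eq_0_iff_dvd[symmetric])
  also have "\<dots> \<longleftrightarrow> 1 + 2 * b = q"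
  proof
    assume "q dvd 1 + 2 * b"
    then obtain k where k: "1 + 2 * b = q * k"
      by blast
    have "k < 2"
    proof (rule ccontr)
      assume "\<not> k < 2"
      then have "q * 2 \<le> q * k"
        by simp
      then show False
        using k \<open>b < q\<close> by linarith
    qed
    moreover have "k \<noteq> 0"
      using k by (metis add_is_0 mult_0_right one_neq_zero)
    ultimately show "1 + 2 * b = q"
      using k by (simp add: less_2_cases_iff)
  qed auto
  also have "\<dots> \<longleftrightarrow> b = (q - 1) div 2"
    using assms by presburger
  finally show ?thesis
    by (simp add: b_def)
qed

lemma four_mult_add_one_le_power:
  fixes q M :: nat
  assumes "odd q" "3 \<le> q" "1 \<le> M" "\<not> (q = 3 \<and> M = 1)"
  shows "4 * M + 1 \<le> q ^ M"
proof (cases "M = 1")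
  case True
  have "5 \<le> q"
    using assms True by presburger
  then show ?thesis
    using True by simp
next
  case False
  then have "2 \<le> M"
    using assms(3) by simp
  then have "4 * M + 1 \<le> 3 ^ M"
  proof (induction M rule: nat_induct_at_least)
    case (Suc M)
    then show ?case
      by simp
  qed simp
  also have "\<dots> \<le> q ^ M"
    using assms(2) by (rule power_mono) simp
  finally show ?thesis .
qed

lemma count_le_square_even:
  fixes M X c :: nat
  assumes "4 * M + 1 \<le> X" "2 * c \<le> X + 1"
  shows "4 * M * (2 * c) \<le> X * X"
proof -
  have "(4 * M + 1) * (X + 1) \<le> X * (X + 1)"
    using assms(1) by (rule mult_right_mono) simp
  moreover have "4 * M * (2 * c) \<le> 4 * M * (X + 1)"
    using assms(2) by (rule mult_left_mono) simp
  ultimately show ?thesis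
    by (simp add: algebra_simps)
qed

lemma count_le_square_odd:
  fixes M Y c q :: nat
  assumes "4 * M + 1 \<le> Y + 1" "2 * c \<le> q * Y"
  shows "(4 * M + 2) * (2 * c) \<le> q * (Y + 1) * (Y + 1)"
proof -
  have "(4 * M + 2) * (2 * c) \<le> (4 * M + 2) * (q * Y)"
    using assms(2) by (rule mult_left_mono) simp
  also have "\<dots> \<le> (Y + 2) * (q * Y)"
    using assms(1) by (intro mult_right_mono) simp_all
  also have "\<dots> \<le> q * (Y + 1) * (Y + 1)"
    by (simp add: algebra_simps)
  finally show ?thesis .
qed

text \<open>Used with \<open>c\<close> the number of cyclotomic cosets in the generator, this says that the
  generator has degree \<open>2mc < (q\<^sup>m + 1)/2\<close>.\<close>
lemma coset_bound_count_le:
  fixes q m T c :: nat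
  assumes "coset_bound q m T" "odd q" "3 \<le> q"
    and "2 * c \<le> T + 1" and "2 * q * c < T * (q - 1) + 2 * q"
  shows "4 * m * c \<le> q ^ m"
  using assms(1)
proof (cases rule: coset_boundE)
  case (even M)
  have "4 * M + 1 \<le> q ^ M"
    using even assms by (intro four_mult_add_one_le_power) auto
  then have "4 * M * (2 * c) \<le> q ^ M * q ^ M"
    using even(3) assms(4) by (intro count_le_square_even) auto
  moreover have "q ^ m = q ^ M * q ^ M"
    using even(1) by (simp only: mult_2 power_add)
  ultimately show ?thesis
    using even(1) by (simp add: mult.assoc)
next
  case (odd M)
  define Y where "Y = q ^ M - 1"
  have X: "q ^ M = Y + 1"
    unfolding Y_def using assms(3) by simp
  have "q ^ m = q * q ^ M * q ^ M"
    using odd(1) by (simp add: mult_2 power_add)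
  then have q_m: "q ^ m = q * (Y + 1) * (Y + 1)"
    by (simp only: X)
  show ?thesis
  proof (cases "q = 3 \<and> M = 1")
    case True
    then have "c \<le> 2"
      using odd(3) assms(5) by simp
    then show ?thesis
      using True odd(1) by simp
  next
    case False
    then have "4 * M + 1 \<le> Y + 1"
      using four_mult_add_one_le_power[OF assms(2,3) odd(2)] X by simp
    moreover have "2 * c \<le> q * Y"
      using odd(3) assms(4) X by (simp add: algebra_simps)
    ultimately have "(4 * M + 2) * (2 * c) \<le> q ^ m"
      unfolding q_m by (rule count_le_square_odd)
    then show ?thesis
      using odd(1) by (simp add: algebra_simps)
  qed
qed

lemma mod_multiples_eq:
  fixes g P :: "'a::field poly"
  assumes "g dvd P" "degree g < degree P"
  shows "{(f * g) mod P | f. True} = {g * r | r. degree r < degree P - degree g}"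
proof -
  obtain h where P: "P = g * h"
    using assms(1) by blast
  then have "g \<noteq> 0" "h \<noteq> 0"
    using assms(2) by auto
  then have degree_h: "degree h = degree P - degree g"
    by (simp add: P degree_mult_eq)
  have mod_P: "(f * g) mod P = g * (f mod h)" for f
    by (simp add: P mult.commute[of f g] mod_mult_mult1)
  show ?thesis
  proof (intro subset_antisym subsetI)
    fix c assume "c \<in> {(f * g) mod P | f. True}"
    then obtain f where "c = g * (f mod h)"
      using mod_P by auto
    moreover have "degree (f mod h) < degree h"
      using degree_mod_less[OF \<open>h \<noteq> 0\<close>, of f] degree_h assms(2) by auto
    ultimately show "c \<in> {g * r | r. degree r < degree P - degree g}"
      using degree_h by auto
  next
    fix c assume "c \<in> {g * r | r. degree r < degree P - degree g}"
    then obtain r where "c = g * r" "degree r < degree h"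
      using degree_h by auto
    then have "(r * g) mod P = c"
      using mod_P mod_poly_less by metis
    then show "c \<in> {(f * g) mod P | f. True}"
      by auto
  qed
qed

lemma dim_multiples:
  fixes g :: "'a::field poly"
  assumes "g \<noteq> 0"
  shows "vector_space.dim Polynomial.smult {g * r | r. degree r < d} = d"
proof -
  interpret vector_space "Polynomial.smult :: 'a \<Rightarrow> 'a poly \<Rightarrow> 'a poly"
    by unfold_locales (simp_all add: smult_add_right smult_add_left)
  define b where "b j = g * Polynomial.monom 1 j" for j
  have smult_b: "g * Polynomial.monom a j = Polynomial.smult a (b j)" for a j
    by (metis b_def mult_smult_right smult_monom mult_1_right)
  have "inj_on b {..<d}"
    by (rule inj_onI) (use assms in \<open>simp add: b_def monom_eq_iff'\<close>)
  then have "card (b ` {..<d}) = d"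
    by (simp add: card_image)
  moreover have "b ` {..<d} \<subseteq> {g * r | r. degree r < d}"
    unfolding b_def by (auto simp: degree_monom_eq)
  moreover have "{g * r | r. degree r < d} \<subseteq> span (b ` {..<d})"
  proof
    fix c assume "c \<in> {g * r | r. degree r < d}"
    then obtain r where "c = g * r" "degree r < d"
      by auto
    moreover have "{..<d} = {..d - 1}"
      using \<open>degree r < d\<close> by auto
    ultimately have "c = g * (\<Sum>j<d. Polynomial.monom (Polynomial.coeff r j) j)"
      using poly_as_sum_of_monoms'[of r "d - 1"] by simp
    also have "\<dots> = (\<Sum>j<d. Polynomial.smult (Polynomial.coeff r j) (b j))"
      by (simp add: sum_distrib_left smult_b)
    also have "\<dots> \<in> span (b ` {..<d})"
      by (intro span_sum span_scale span_base) auto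
    finally show "c \<in> span (b ` {..<d})" .
  qed
  moreover have "independent (b ` {..<d})"
  proof (rule independent_if_scalars_zero)
    fix f x assume sum: "(\<Sum>x\<in>b ` {..<d}. Polynomial.smult (f x) x) = 0" and "x \<in> b ` {..<d}"
    then obtain j0 where "j0 < d" "x = b j0"
      by auto
    have "g * (\<Sum>j<d. Polynomial.monom (f (b j)) j) = (\<Sum>x\<in>b ` {..<d}. Polynomial.smult (f x) x)"
      using \<open>inj_on b {..<d}\<close> by (simp add: sum.reindex sum_distrib_left smult_b)
    then have "(\<Sum>j<d. Polynomial.monom (f (b j)) j) = 0"
      using sum assms by simp
    then have "Polynomial.coeff (\<Sum>j<d. Polynomial.monom (f (b j)) j) j0 = 0"
      by simp
    then show "f x = 0"
      using \<open>j0 < d\<close> \<open>x = b j0\<close> by (simp add: coeff_sum)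
  qed simp
  ultimately show ?thesis
    by (intro dim_unique) auto
qed

lemma hamming_dist_eq_card_coeff_diff:
  fixes c1 c2 :: "'a::ab_group_add poly"
  assumes "degree c1 < n" "degree c2 < n"
  shows "hamming_dist n c1 c2 = card {i. Polynomial.coeff (c1 - c2) i \<noteq> 0}"
proof -
  have "(i < n \<and> Polynomial.coeff c1 i \<noteq> Polynomial.coeff c2 i)
      \<longleftrightarrow> Polynomial.coeff (c1 - c2) i \<noteq> 0" for i
  proof (cases "i < n")
    case False
    then have "Polynomial.coeff c1 i = 0" "Polynomial.coeff c2 i = 0"
      using assms by (simp_all add: coeff_eq_0)
    then show ?thesis
      by simp
  qed simp
  then show ?thesis
    by (simp add: hamming_dist_def)
qed

lemma hamming_dist_le: "hamming_dist n c1 c2 \<le> n"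
proof -
  have "{i. i < n \<and> Polynomial.coeff c1 i \<noteq> Polynomial.coeff c2 i} \<subseteq> {..<n}"
    by auto
  then show ?thesis
    unfolding hamming_dist_def by (metis card_lessThan card_mono finite_lessThan)
qed

lemma min_dist_geI:
  assumes "c1 \<in> C" "c2 \<in> C" "c1 \<noteq> c2"
    and "\<And>c1 c2. c1 \<in> C \<Longrightarrow> c2 \<in> C \<Longrightarrow> c1 \<noteq> c2 \<Longrightarrow> D \<le> hamming_dist n c1 c2"
  shows "D \<le> min_dist n C"
proof -
  define H where "H = {hamming_dist n c1 c2 | c1 c2. c1 \<in> C \<and> c2 \<in> C \<and> c1 \<noteq> c2}"
  have "H \<subseteq> {..n}"
    unfolding H_def using hamming_dist_le by blast
  then have "finite H"
    by (rule finite_subset) simp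
  moreover have "H \<noteq> {}"
    unfolding H_def using assms(1-3) by blast
  moreover have "\<forall>h\<in>H. D \<le> h"
    unfolding H_def using assms(4) by blast
  ultimately show ?thesis
    unfolding min_dist_def H_def[symmetric] by simp
qed

text \<open>A Vandermonde system with distinct nodes has only the trivial solution: test it against
  the polynomial vanishing at all nodes but one.\<close>
lemma vandermonde_solution_eq_0:
  fixes y X :: "'i \<Rightarrow> 'b::field"
  assumes "finite S" "inj_on X S"
    and system: "\<And>j. j < card S \<Longrightarrow> (\<Sum>e\<in>S. y e * X e ^ j) = 0"
    and "e0 \<in> S"
  shows "y e0 = 0"
proof -
  define L where "L = (\<Prod>e\<in>S - {e0}. [:- X e, 1:])"
  have "card S > 0"
    using assms(1,4) by (auto simp: card_gt_0_iff)
  then have "degree L < card S"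
    unfolding L_def using assms(1,4) by (subst degree_prod_sum_eq) (auto simp: card_Diff_singleton)
  have "(\<Sum>e\<in>S. y e * poly L (X e))
      = (\<Sum>j\<le>degree L. Polynomial.coeff L j * (\<Sum>e\<in>S. y e * X e ^ j))"
    by (simp add: poly_altdef sum_distrib_left sum_distrib_right mult_ac sum.swap[of _ S])
  also have "\<dots> = 0"
    using system \<open>degree L < card S\<close> by (intro sum.neutral) auto
  finally have "(\<Sum>e\<in>S. y e * poly L (X e)) = 0" .
  moreover have "(\<Sum>e\<in>S. y e * poly L (X e)) = y e0 * poly L (X e0)"
    by (rule sum.mono_neutral_right[where S = "{e0}", simplified])
      (use assms(1,4) in \<open>auto simp: L_def poly_prod\<close>)
  moreover have "poly L (X e0) \<noteq> 0"
    unfolding L_def using assms(1,2,4) by (auto simp: poly_prod inj_on_def)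
  ultimately show ?thesis
    by simp
qed

lemma inj_on_power_below_order:
  fixes x :: "'b::field"
  assumes "x \<noteq> 0" and order: "\<And>i. 0 < i \<Longrightarrow> i < n \<Longrightarrow> x ^ i \<noteq> 1"
  shows "inj_on (\<lambda>e. x ^ e) {..<n}"
proof -
  have "x ^ a \<noteq> x ^ b" if "a < b" "b < n" for a b
  proof
    assume "x ^ a = x ^ b"
    moreover have "x ^ b = x ^ a * x ^ (b - a)"
      using that by (simp flip: power_add)
    ultimately have "x ^ a * x ^ (b - a) = x ^ a * 1"
      by simp
    then show False
      using order[of "b - a"] that \<open>x \<noteq> 0\<close> by simp
  qed
  then show ?thesis
    by (intro inj_onI) (metis lessThan_iff linorder_neqE_nat)
qed

lemma bch_bound:
  fixes c :: "'b::field poly"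
  assumes "c \<noteq> 0" "degree c < n"
    and order: "\<And>i. 0 < i \<Longrightarrow> i < n \<Longrightarrow> x ^ i \<noteq> 1" and "x \<noteq> 0" "w \<noteq> 0"
    and roots: "\<And>j. j < D \<Longrightarrow> poly c (w * x ^ j) = 0"
  shows "D < card {i. Polynomial.coeff c i \<noteq> 0}"
proof (rule ccontr)
  define S where "S = {i. Polynomial.coeff c i \<noteq> 0}"
  assume "\<not> D < card {i. Polynomial.coeff c i \<noteq> 0}"
  then have "card S \<le> D"
    by (simp add: S_def)
  have S_sub: "S \<subseteq> {..degree c}"
    unfolding S_def using le_degree by auto
  then have "finite S"
    using finite_subset by blast
  have "degree c \<in> S"
    using assms(1) by (simp add: S_def)
  have "S \<subseteq> {..<n}"
    using S_sub assms(2) by auto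
  then have inj: "inj_on (\<lambda>e. x ^ e) S"
    using inj_on_power_below_order[OF \<open>x \<noteq> 0\<close> order] by (rule inj_on_subset[rotated])
  have system: "(\<Sum>e\<in>S. (Polynomial.coeff c e * w ^ e) * (x ^ e) ^ j) = 0" if "j < card S" for j
  proof -
    have "(\<Sum>e\<in>S. (Polynomial.coeff c e * w ^ e) * (x ^ e) ^ j)
        = (\<Sum>e\<le>degree c. Polynomial.coeff c e * (w * x ^ j) ^ e)"
      by (rule sum.mono_neutral_cong_left)
        (use S_sub in \<open>auto simp: S_def power_mult_distrib mult_ac simp flip: power_mult\<close>)
    also have "\<dots> = 0"
      using roots[of j] that \<open>card S \<le> D\<close> by (simp add: poly_altdef)
    finally show ?thesis .
  qed
  have "Polynomial.coeff c (degree c) * w ^ degree c = 0"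
    by (rule vandermonde_solution_eq_0[OF \<open>finite S\<close> inj system \<open>degree c \<in> S\<close>])
  then show False
    using assms(1,5) by simp
qed

lemma primitive_element_power_eq_1_iff:
  fixes a :: "'c::{finite,field}"
  assumes "primitive_element a"
  shows "a ^ e = 1 \<longleftrightarrow> (card (UNIV :: 'c set) - 1) dvd e"
proof -
  define Q where "Q = card (UNIV :: 'c set) - 1"
  have "a \<noteq> 0"
    using assms by (simp add: primitive_element_def)
  have "0 < Q"
    using card_UNIV_field_ge_2[where 'c = 'c] by (simp add: Q_def)
  have "a * a ^ Q = a * 1"
    using power_card_eq_self[of a] \<open>0 < Q\<close> by (simp add: Q_def flip: power_Suc)
  then have "a ^ Q = 1"
    using \<open>a \<noteq> 0\<close> by simp
  then have power_mod: "a ^ e = a ^ (e mod Q)" for e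
    by (metis div_mult_mod_eq power_add power_mult power_one mult_1 mult.commute)
  show ?thesis
  proof
    assume "a ^ e = 1"
    then have "a ^ (e mod Q) = 1"
      by (simp add: power_mod[symmetric])
    then have "e mod Q = 0"
      using assms \<open>0 < Q\<close> unfolding primitive_element_def Q_def[symmetric]
      by (meson mod_less_divisor neq0_conv)
    then show "(card (UNIV :: 'c set) - 1) dvd e"
      by (simp add: Q_def mod_eq_0_iff_dvd)
  next
    assume "(card (UNIV :: 'c set) - 1) dvd e"
    then have "e mod Q = 0"
      by (simp add: Q_def)
    then show "a ^ e = 1"
      using power_mod[of e] by simp
  qed
qed

lemma primitive_element_root_of_unity:
  fixes a :: "'c::{finite,field}"
  assumes "primitive_element a" "N dvd card (UNIV :: 'c set) - 1" "0 < N"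
  shows "(a ^ ((card (UNIV :: 'c set) - 1) div N)) ^ j = 1 \<longleftrightarrow> N dvd j"
proof -
  obtain K where K: "card (UNIV :: 'c set) - 1 = N * K"
    using assms(2) by blast
  then have "0 < K"
    using card_UNIV_field_ge_2[where 'c = 'c] by (cases "K = 0") auto
  have "(card (UNIV :: 'c set) - 1) div N = K"
    using K assms(3) by simp
  then have "(a ^ ((card (UNIV :: 'c set) - 1) div N)) ^ j = a ^ (j * K)"
    by (simp add: power_mult mult.commute)
  moreover have "a ^ (j * K) = 1 \<longleftrightarrow> N * K dvd j * K"
    using primitive_element_power_eq_1_iff[OF assms(1), of "j * K", unfolded K] .
  ultimately show ?thesis
    using \<open>0 < K\<close> by simp
qed

locale negacyclic_bch_setting = finite_field_embedding phi q
  for phi :: "'a::{finite,field_gcd} \<Rightarrow> 'b::{finite,field}" and q :: nat +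
  fixes beta :: 'b and m n delta :: nat
  assumes odd_q: "odd q"
    and n_eq: "n = (q ^ m + 1) div 2"
    and beta_power_eq_1_iff: "beta ^ j = 1 \<longleftrightarrow> 2 * n dvd j"
    and two_le_delta: "2 \<le> delta"
    and delta_bound: "(even m \<and> m \<ge> 4 \<and> 2 * delta \<le> q ^ (m div 2) + 3) \<or>
      (odd m \<and> m \<ge> 3 \<and> 2 * delta + q \<le> q ^ ((m + 1) div 2) + 2)"
begin

text \<open>The exponents \<open>1 + 2i\<close>, \<open>i \<in> coset_reps\<close>, are the leaders of the \<open>q\<close>-cyclotomic
  cosets modulo \<open>2n\<close> meeting the defining set \<open>{1, 3, \<dots>, 2\<delta> - 3}\<close>.\<close>
definition coset_reps :: "nat set" where
  "coset_reps = {i. i \<le> delta - 2 \<and> i mod q \<noteq> (q - 1) div 2}"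

definition generator :: "'a poly" where
  "generator = (\<Prod>i\<in>coset_reps. minpoly phi (beta ^ (1 + 2 * i)))"

lemma q_ge_3: "3 \<le> q"
  using q_gt_1 odd_q by presburger

lemma two_n_eq: "2 * n = q ^ m + 1"
  using odd_q by (simp add: n_eq)

lemma n_pos: "0 < n"
  using two_n_eq by simp

lemma m_ge_3: "3 \<le> m"
  using delta_bound by auto

lemma coset_bound_delta: "coset_bound q m (2 * delta - 3)"
  using delta_bound two_le_delta unfolding coset_bound_def by auto

lemma beta_ne_0: "beta \<noteq> 0"
  using beta_power_eq_1_iff[of "2 * n"] two_n_eq by auto

lemma beta_power_eq_iff: "beta ^ a = beta ^ b \<longleftrightarrow> [a = b] (mod 2 * n)"
proof -
  have *: "beta ^ a = beta ^ b \<longleftrightarrow> [a = b] (mod 2 * n)" if "a \<le> b" for a b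
  proof -
    have "beta ^ b = beta ^ a * beta ^ (b - a)"
      using that by (simp flip: power_add)
    then have "beta ^ a = beta ^ b \<longleftrightarrow> beta ^ (b - a) = 1"
      using beta_ne_0 by auto
    also have "\<dots> \<longleftrightarrow> [a = b] (mod 2 * n)"
      using that by (simp add: beta_power_eq_1_iff cong_altdef_nat cong_sym_eq[of a b])
    finally show ?thesis .
  qed
  show ?thesis
    using *[of a b] *[of b a] by (cases "a \<le> b") (auto simp: cong_sym_eq)
qed

lemma beta_power_n: "beta ^ n = - 1"
proof -
  have "(beta ^ n) ^ 2 = 1"
    by (simp add: beta_power_eq_1_iff flip: power_mult)
  moreover have "beta ^ n \<noteq> 1"
    using n_pos by (auto simp: beta_power_eq_1_iff dest: dvd_imp_le)
  ultimately show ?thesis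
    using power2_eq_1_iff by blast
qed

lemma coset_repsD:
  assumes "i \<in> coset_reps"
  shows "1 + 2 * i \<le> 2 * delta - 3" "\<not> q dvd 1 + 2 * i"
  using assms two_le_delta dvd_one_add_two_mult_iff[OF odd_q, of i] by (auto simp: coset_reps_def)

lemma frob_orbit_beta_power: "frob_orbit (beta ^ s) = (\<lambda>k. beta ^ (s * q ^ k)) ` {..<2 * m}"
proof (intro subset_antisym subsetI)
  fix z assume "z \<in> frob_orbit (beta ^ s)"
  then obtain k where "z = beta ^ (s * q ^ k)"
    by (auto simp: frob_orbit_def power_mult)
  moreover have "[s * q ^ k = s * q ^ (k mod (2 * m))] (mod 2 * n)"
    unfolding two_n_eq by (rule cong_mult[OF cong_refl power_cong_power_mod])
  moreover have "k mod (2 * m) < 2 * m"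
    using m_ge_3 by simp
  ultimately show "z \<in> (\<lambda>k. beta ^ (s * q ^ k)) ` {..<2 * m}"
    by (auto simp: beta_power_eq_iff)
qed (auto simp: frob_orbit_def power_mult)

lemma card_frob_orbit_beta_power:
  assumes "i \<in> coset_reps"
  shows "card (frob_orbit (beta ^ (1 + 2 * i))) = 2 * m"
proof -
  define s where "s = 1 + 2 * i"
  have no_collision: False if "a < b" "b < 2 * m" "beta ^ (s * q ^ a) = beta ^ (s * q ^ b)" for a b
  proof -
    have "[s * 1 * q ^ a = (s * q ^ (b - a)) * q ^ a] (mod 2 * n)"
      using that by (simp add: beta_power_eq_iff mult.assoc flip: power_add)
    moreover have "coprime (q ^ m + 1) (q ^ m)"
      by (rule coprime_add_one_left)
    then have "coprime (q ^ m + 1) q"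
      using m_ge_3 by simp
    then have "coprime (q ^ a) (2 * n)"
      by (simp add: two_n_eq coprime_commute)
    ultimately have "[s * q ^ (b - a) = s] (mod q ^ m + 1)"
      by (simp add: cong_mult_rcancel_nat cong_sym_eq two_n_eq)
    then have "2 * m dvd b - a"
      using cyclotomic_coset_cong[OF coset_bound_delta q_ge_3] coset_repsD[OF assms]
      unfolding s_def by blast
    then show False
      using that by (simp add: nat_dvd_not_less)
  qed
  have "inj_on (\<lambda>k. beta ^ (s * q ^ k)) {..<2 * m}"
  proof (rule inj_onI)
    fix a b assume "a \<in> {..<2 * m}" "b \<in> {..<2 * m}" "beta ^ (s * q ^ a) = beta ^ (s * q ^ b)"
    then show "a = b"
      using no_collision[of a b] no_collision[of b a] by (cases a b rule: linorder_cases) auto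
  qed
  then have "card (frob_orbit (beta ^ s)) = 2 * m"
    by (simp only: frob_orbit_beta_power card_image card_lessThan)
  then show ?thesis
    by (simp only: s_def)
qed

lemma minpoly_beta_power_inj:
  assumes "i \<in> coset_reps" "j \<in> coset_reps"
    and "minpoly phi (beta ^ (1 + 2 * i)) = minpoly phi (beta ^ (1 + 2 * j))"
  shows "i = j"
proof -
  have "frob_orbit (beta ^ (1 + 2 * i)) = frob_orbit (beta ^ (1 + 2 * j))"
    using assms(3) by (simp only: minpoly_eq_iff)
  then have "beta ^ (1 + 2 * j) \<in> frob_orbit (beta ^ (1 + 2 * i))"
    by (simp only: self_in_frob_orbit)
  then obtain k where "beta ^ (1 + 2 * j) = beta ^ ((1 + 2 * i) * q ^ k)"
    unfolding frob_orbit_beta_power by blast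
  then have "[1 + 2 * j = (1 + 2 * i) * q ^ k] (mod q ^ m + 1)"
    by (simp only: beta_power_eq_iff two_n_eq)
  then have "1 + 2 * i = 1 + 2 * j"
    using cyclotomic_coset_cong[OF coset_bound_delta q_ge_3 coset_repsD(1)[OF assms(1)]
        coset_repsD(1)[OF assms(2)] coset_repsD(2)[OF assms(1)] coset_repsD(2)[OF assms(2)]]
    by (blast intro: cong_sym)
  then show ?thesis
    by simp
qed

text \<open>Exponents \<open>1 + 2i\<close> divisible by \<open>q\<close> are Frobenius images of smaller ones.\<close>
lemma minpoly_beta_power_reduce:
  assumes "i \<le> delta - 2"
  shows "\<exists>j\<in>coset_reps. minpoly phi (beta ^ (1 + 2 * i)) = minpoly phi (beta ^ (1 + 2 * j))"
  using assms
proof (induction i rule: less_induct)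
  case (less i)
  show ?case
  proof (cases "i \<in> coset_reps")
    case False
    obtain h where q: "q = 2 * h + 1"
      using odd_q by (rule oddE)
    define k where "k = i div q"
    have "i mod q = (q - 1) div 2"
      using False less.prems by (simp add: coset_reps_def)
    then have "i mod q = h"
      by (simp add: q)
    then have i: "i = k * q + h"
      unfolding k_def by (metis div_mult_mod_eq)
    then have "1 + 2 * i = (1 + 2 * k) * q"
      by (simp add: q algebra_simps)
    then have "minpoly phi (beta ^ (1 + 2 * i)) = minpoly phi ((beta ^ (1 + 2 * k)) ^ q)"
      by (simp only: power_mult)
    then have "minpoly phi (beta ^ (1 + 2 * i)) = minpoly phi (beta ^ (1 + 2 * k))"
      by (simp only: minpoly_power_q)
    moreover have "k < i"
    proof -
      have "k \<le> k * q" "0 < h"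
        using q_ge_3 q by simp_all
      then show ?thesis
        using i by linarith
    qed
    moreover obtain j where "j \<in> coset_reps"
      "minpoly phi (beta ^ (1 + 2 * k)) = minpoly phi (beta ^ (1 + 2 * j))"
      using less.IH[of k] \<open>k < i\<close> less.prems by auto
    ultimately show ?thesis
      by auto
  qed auto
qed

end

context negacyclic_bch_setting
begin

lemma finite_coset_reps: "finite coset_reps"
  by (simp add: coset_reps_def)

lemma zero_in_coset_reps: "0 \<in> coset_reps"
  using q_ge_3 by (simp add: coset_reps_def)

lemma image_minpoly_beta_power:
  "(\<lambda>i. minpoly phi (beta ^ (1 + 2 * i))) ` {0..delta - 2}
    = (\<lambda>i. minpoly phi (beta ^ (1 + 2 * i))) ` coset_reps"
  using minpoly_beta_power_reduce by (fastforce simp: coset_reps_def)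

lemma lead_coeff_generator: "lead_coeff generator = 1"
  by (simp add: generator_def lead_coeff_prod lead_coeff_minpoly)

lemma generator_ne_0: "generator \<noteq> 0"
  using lead_coeff_generator by auto

text \<open>The minimal polynomials over the coset representatives are distinct primes, so their
  least common multiple is their product.\<close>
lemma bch_generator_eq: "bch_generator phi beta delta = generator"
proof -
  let ?f = "\<lambda>i. minpoly phi (beta ^ (1 + 2 * i))"
  have "Lcm (?f ` coset_reps) = normalize (\<Prod>(?f ` coset_reps))"
    using finite_coset_reps zero_in_coset_reps prime_minpoly
    by (intro Lcm_coprime) (auto intro: primes_coprime)
  also have "inj_on ?f coset_reps"
    by (rule inj_onI) (rule minpoly_beta_power_inj)
  then have "\<Prod>(?f ` coset_reps) = generator"
    unfolding generator_def by (simp only: prod.reindex comp_def)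
  also have "normalize generator = generator"
    using lead_coeff_generator by (simp add: normalize_poly_def one_pCons[symmetric])
  finally show ?thesis
    unfolding bch_generator_def image_minpoly_beta_power .
qed

lemma minpoly_beta_power_dvd_generator:
  "i \<le> delta - 2 \<Longrightarrow> minpoly phi (beta ^ (1 + 2 * i)) dvd generator"
  unfolding bch_generator_eq[symmetric] bch_generator_def by (rule dvd_Lcm) simp

lemma degree_generator: "degree generator = 2 * m * card coset_reps"
proof -
  have "degree generator = (\<Sum>i\<in>coset_reps. degree (minpoly phi (beta ^ (1 + 2 * i))))"
    unfolding generator_def by (rule degree_prod_sum_eq) (simp add: minpoly_ne_0)
  also have "\<dots> = (\<Sum>i\<in>coset_reps. 2 * m)"
    by (rule sum.cong) (simp_all only: degree_minpoly card_frob_orbit_beta_power)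
  finally show ?thesis
    by simp
qed

lemma generator_dvd: "generator dvd [:0, 1:] ^ n + 1"
proof -
  have map_poly_phi_X: "map_poly phi ([:0, 1:] ^ n + 1) = [:0, 1:] ^ n + 1"
    by (simp add: map_poly_phi_add map_poly_phi_power map_poly_pCons phi_0 phi_1)
  have "minpoly phi (beta ^ (1 + 2 * i)) dvd [:0, 1:] ^ n + 1" for i
  proof (rule minpoly_dvd)
    have "(beta ^ (1 + 2 * i)) ^ n = (beta ^ n) ^ (1 + 2 * i)"
      by (simp only: mult.commute flip: power_mult)
    then show "poly (map_poly phi ([:0, 1:] ^ n + 1)) (beta ^ (1 + 2 * i)) = 0"
      by (simp add: map_poly_phi_X beta_power_n)
  qed
  then show ?thesis
    unfolding bch_generator_eq[symmetric] bch_generator_def by (auto intro: Lcm_least)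
qed

lemma card_coset_reps_eq_ceiling:
  "int (card coset_reps) = \<lceil>real ((2 * delta - 3) * (q - 1)) / real (2 * q)\<rceil>"
proof -
  have "2 * delta - 3 = 2 * (delta - 2) + 1"
    using two_le_delta by simp
  then show ?thesis
    unfolding coset_reps_def by (simp only: card_residue_avoiding_eq_ceiling[OF odd_q q_ge_3])
qed

lemma degree_generator_less: "2 * m * card coset_reps < n"
proof -
  have "card coset_reps \<le> card {..delta - 2}"
    by (rule card_mono) (auto simp: coset_reps_def)
  then have "2 * card coset_reps \<le> (2 * delta - 3) + 1"
    using two_le_delta by simp
  moreover have "2 * (delta - 2) + 1 = 2 * delta - 3"
    using two_le_delta by simp
  then have "2 * q * card coset_reps < (2 * delta - 3) * (q - 1) + 2 * q"
    using card_residue_avoiding_bounds(2)[OF odd_q q_ge_3, of "delta - 2", folded coset_reps_def]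
    by simp
  ultimately have "4 * m * card coset_reps \<le> q ^ m"
    by (rule coset_bound_count_le[OF coset_bound_delta odd_q q_ge_3])
  then show ?thesis
    using two_n_eq by linarith
qed

lemma negacyclic_bch_eq:
  "negacyclic_bch phi beta n delta = {generator * r | r. degree r < n - degree generator}"
proof -
  have "degree ([:0, 1:] ^ n + 1 :: 'a poly) = n"
    using n_pos by (simp add: degree_add_eq_left degree_linear_power)
  then show ?thesis
    unfolding negacyclic_bch_def negacyclic_code_def bch_generator_eq
    using mod_multiples_eq[OF generator_dvd] degree_generator_less degree_generator by simp
qed

lemma code_dim_negacyclic_bch:
  "code_dim (negacyclic_bch phi beta n delta) = n - 2 * m * card coset_reps"
  unfolding negacyclic_bch_eq code_dim_def by (simp add: dim_multiples generator_ne_0 degree_generator)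

lemma poly_generator_beta_power:
  assumes "i \<le> delta - 2" "[e = (1 + 2 * i) * q ^ k] (mod 2 * n)"
  shows "poly (map_poly phi generator) (beta ^ e) = 0"
proof -
  obtain r where r: "generator = minpoly phi (beta ^ (1 + 2 * i)) * r"
    using minpoly_beta_power_dvd_generator[OF assms(1)] by blast
  have "beta ^ e = (beta ^ (1 + 2 * i)) ^ (q ^ k)"
    using assms(2) by (simp only: power_mult[symmetric] beta_power_eq_iff)
  then have "beta ^ e \<in> frob_orbit (beta ^ (1 + 2 * i))"
    unfolding frob_orbit_def by (rule range_eqI)
  then have "poly (map_poly phi (minpoly phi (beta ^ (1 + 2 * i)))) (beta ^ e) = 0"
    by (simp only: poly_minpoly_eq_0_iff)
  then show ?thesis
    by (simp only: r map_poly_phi_mult poly_mult mult_zero_left)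
qed

lemma cong_two_n_minus:
  assumes "s \<le> 2 * n"
  shows "[2 * n - s = s * q ^ m] (mod 2 * n)"
proof -
  have "[s * q ^ m + s = 0] (mod 2 * n)"
    unfolding two_n_eq by (rule mult_power_add_self_cong_0)
  moreover have "[2 * n - s + s = 0] (mod 2 * n)"
    using assms by (simp add: cong_0_iff)
  ultimately have "[2 * n - s + s = s * q ^ m + s] (mod 2 * n)"
    using cong_sym cong_trans by blast
  then show ?thesis
    by (simp only: cong_add_rcancel_nat)
qed

text \<open>The roots \<open>\<beta>\<^sup>s\<close> and \<open>\<beta>\<^sup>-\<^sup>s\<close> for odd \<open>s \<le> max_odd_root\<close> form a run
  of consecutive powers of \<open>\<beta>\<^sup>2\<close>; when \<open>\<delta> \<equiv> (q + 1)/2 (mod q)\<close>, the run extends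
  by one step because \<open>2\<delta> - 1\<close> is \<open>q\<close> times an exponent already in the defining set.\<close>
definition max_odd_root :: nat where
  "max_odd_root = (if delta mod q = (q + 1) div 2 then 2 * delta - 1 else 2 * delta - 3)"

lemma max_odd_root_bounds: "odd max_odd_root" "2 * delta - 3 \<le> max_odd_root" "max_odd_root < 2 * n"
proof -
  have "2 * (2 * delta - 3) < 2 * n"
    using coset_bound_double_less[OF coset_bound_delta q_ge_3] two_n_eq by simp
  moreover have "(3::nat) ^ 3 \<le> 3 ^ m" "3 ^ m \<le> q ^ m"
    by (rule power_increasing[OF m_ge_3], simp) (rule power_mono[OF q_ge_3], simp)
  then have "2 * n \<ge> 28"
    using two_n_eq by simp
  ultimately show "odd max_odd_root" "2 * delta - 3 \<le> max_odd_root" "max_odd_root < 2 * n"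
    using two_le_delta by (auto simp: max_odd_root_def)
qed

lemma max_odd_root_exponent:
  assumes "odd s" "s \<le> max_odd_root"
  obtains i k where "i \<le> delta - 2" "s = (1 + 2 * i) * q ^ k"
proof (cases "s \<le> 2 * delta - 3")
  case True
  then show ?thesis
    using that[of "(s - 1) div 2" 0] assms(1) by (auto elim!: oddE)
next
  case False
  then have special: "delta mod q = (q + 1) div 2"
    using assms(2) by (auto simp: max_odd_root_def split: if_splits)
  then have "s \<le> 2 * delta - 1"
    using assms(2) by (simp add: max_odd_root_def)
  then have "s = 2 * delta - 1"
    using False assms(1) two_le_delta by presburger
  obtain h where q: "q = 2 * h + 1"
    using odd_q by (rule oddE)
  define t where "t = delta div q"
  have "delta mod q = h + 1"
    using special q by simp
  then have delta: "delta = t * q + (h + 1)"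
    unfolding t_def by (metis div_mult_mod_eq)
  moreover have "t \<le> t * q" "1 \<le> h"
    using q_ge_3 q by simp_all
  ultimately have "t \<le> delta - 2"
    by linarith
  have "2 * delta - 1 = 2 * (t * q) + q"
    using delta q by simp
  then have "s = (1 + 2 * t) * q ^ 1"
    using \<open>s = 2 * delta - 1\<close> by (simp add: algebra_simps)
  then show ?thesis
    using that \<open>t \<le> delta - 2\<close> by blast
qed

lemma poly_generator_beta_power_odd:
  assumes "odd s" "s \<le> max_odd_root"
  shows "poly (map_poly phi generator) (beta ^ s) = 0"
    and "poly (map_poly phi generator) (beta ^ (2 * n - s)) = 0"
proof -
  obtain i k where "i \<le> delta - 2" "s = (1 + 2 * i) * q ^ k"
    using max_odd_root_exponent[OF assms] .
  have "s * q ^ m = (1 + 2 * i) * q ^ (k + m)"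
    using \<open>s = _\<close> by (simp add: power_add algebra_simps)
  then have "[2 * n - s = (1 + 2 * i) * q ^ (k + m)] (mod 2 * n)"
    using cong_two_n_minus[of s] assms(2) max_odd_root_bounds(3) by simp
  show "poly (map_poly phi generator) (beta ^ s) = 0"
    by (rule poly_generator_beta_power[OF \<open>i \<le> delta - 2\<close>, of _ k]) (simp add: \<open>s = _\<close>)
  show "poly (map_poly phi generator) (beta ^ (2 * n - s)) = 0"
    by (rule poly_generator_beta_power[OF \<open>i \<le> delta - 2\<close> \<open>[2 * n - s = _] (mod _)\<close>])
qed

lemma poly_generator_run:
  assumes "j \<le> max_odd_root"
  shows "poly (map_poly phi generator) (beta ^ (2 * n - max_odd_root) * (beta ^ 2) ^ j) = 0"
proof -
  let ?E = max_odd_root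
  have run: "beta ^ (2 * n - ?E) * (beta ^ 2) ^ j = beta ^ (2 * n - ?E + 2 * j)"
    by (simp add: power_add power_mult)
  show ?thesis
  proof (cases "2 * j < ?E")
    case True
    then have "2 * n - ?E + 2 * j = 2 * n - (?E - 2 * j)"
      using max_odd_root_bounds(3) by simp
    then show ?thesis
      unfolding run using poly_generator_beta_power_odd(2)[of "?E - 2 * j"] True max_odd_root_bounds(1)
      by simp
  next
    case False
    then have "?E < 2 * j"
      using max_odd_root_bounds(1) by (metis dvd_triv_left le_neq_implies_less not_less)
    then have "2 * n - ?E + 2 * j = 2 * n + (2 * j - ?E)"
      using max_odd_root_bounds(3) by simp
    then have "beta ^ (2 * n - ?E + 2 * j) = beta ^ (2 * j - ?E)"
      by (simp add: beta_power_eq_iff cong_def)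
    then show ?thesis
      unfolding run using poly_generator_beta_power_odd(1)[of "2 * j - ?E"] \<open>?E < 2 * j\<close> assms
        max_odd_root_bounds(1) by simp
  qed
qed

lemma hamming_dist_negacyclic_bch:
  assumes "c1 \<in> negacyclic_bch phi beta n delta" "c2 \<in> negacyclic_bch phi beta n delta" "c1 \<noteq> c2"
  shows "max_odd_root + 2 \<le> hamming_dist n c1 c2"
proof -
  obtain r1 r2 where c: "c1 = generator * r1" "c2 = generator * r2"
    and degree_r: "degree r1 < n - degree generator" "degree r2 < n - degree generator"
    using assms(1,2) unfolding negacyclic_bch_eq by blast
  define c where "c = generator * (r1 - r2)"
  have "r1 \<noteq> r2"
    using assms(3) c by auto
  then have "c \<noteq> 0" "degree c < n"
    using degree_r degree_diff_le_max[of r1 r2] generator_ne_0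
    by (auto simp: c_def degree_mult_eq)
  have "degree c1 < n" "degree c2 < n"
    using degree_r degree_mult_le[of generator r1] degree_mult_le[of generator r2]
      degree_generator_less degree_generator by (simp_all add: c)
  then have "hamming_dist n c1 c2 = card {i. Polynomial.coeff (map_poly phi c) i \<noteq> 0}"
    by (simp add: hamming_dist_eq_card_coeff_diff c c_def coeff_map_poly_phi phi_eq_0_iff
        right_diff_distrib)
  moreover have "max_odd_root + 1 < card {i. Polynomial.coeff (map_poly phi c) i \<noteq> 0}"
  proof (rule bch_bound)
    show "map_poly phi c \<noteq> 0" "degree (map_poly phi c) < n"
      using \<open>c \<noteq> 0\<close> \<open>degree c < n\<close> by (simp_all add: map_poly_phi_eq_0_iff degree_map_poly_phi)
    show "beta ^ 2 \<noteq> 0" "beta ^ (2 * n - max_odd_root) \<noteq> 0"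
      using beta_ne_0 by simp_all
    show "(beta ^ 2) ^ i \<noteq> 1" if "0 < i" "i < n" for i
      using that by (auto simp: beta_power_eq_1_iff dest: dvd_imp_le simp flip: power_mult)
    show "poly (map_poly phi c) (beta ^ (2 * n - max_odd_root) * (beta ^ 2) ^ j) = 0"
      if "j < max_odd_root + 1" for j
      using poly_generator_run[of j] that by (simp add: c_def map_poly_phi_mult)
  qed
  ultimately show ?thesis
    by simp
qed

lemma min_dist_negacyclic_bch: "max_odd_root + 2 \<le> min_dist n (negacyclic_bch phi beta n delta)"
proof (rule min_dist_geI)
  show "generator \<in> negacyclic_bch phi beta n delta"
    unfolding negacyclic_bch_eq using degree_generator_less degree_generator
    by (auto intro!: exI[of _ 1])
  show "0 \<in> negacyclic_bch phi beta n delta"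
    unfolding negacyclic_bch_eq using degree_generator_less degree_generator
    by (auto intro!: exI[of _ 0])
qed (use generator_ne_0 hamming_dist_negacyclic_bch in auto)


lemma code_dim_negacyclic_bch_eq_ceiling:
  "int (code_dim (negacyclic_bch phi beta n delta))
    = int n - 2 * int m * \<lceil>real ((2 * delta - 3) * (q - 1)) / real (2 * q)\<rceil>"
  using code_dim_negacyclic_bch card_coset_reps_eq_ceiling degree_generator_less by simp

lemma bch_generator_eq_prod:
  "bch_generator phi beta delta =
    (\<Prod>i \<in> {i. i \<le> delta - 2 \<and> i mod q \<noteq> (q - 1) div 2}. minpoly phi (beta ^ (1 + 2 * i)))"
  by (simp add: bch_generator_eq generator_def coset_reps_def)

lemma min_dist_negacyclic_bch_cases:
  "if delta mod q = (q + 1) div 2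
    then min_dist n (negacyclic_bch phi beta n delta) \<ge> 2 * delta + 1
    else min_dist n (negacyclic_bch phi beta n delta) \<ge> 2 * delta - 1"
  using min_dist_negacyclic_bch two_le_delta by (auto simp: max_odd_root_def)
end

theorem theorem24:
  fixes phi :: "'a::{finite,field_gcd} \<Rightarrow> 'b::{finite,field}"
    and alpha :: 'b and q m n l delta :: nat
  assumes "q = card (UNIV :: 'a set)" and "odd q"
    and "m \<ge> 2" and "n = (q ^ m + 1) div 2"
    and "l = ord (2 * n) q"
    and "ring_embedding phi" and "card (UNIV :: 'b set) = q ^ l"
    and "primitive_element alpha"
    and "2 \<le> delta"
    and "(even m \<and> m \<ge> 4 \<and> 2 * delta \<le> q ^ (m div 2) + 3) \<or>
         (odd m \<and> m \<ge> 3 \<and> 2 * delta + q \<le> q ^ ((m + 1) div 2) + 2)"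
  shows "let beta = alpha ^ ((q ^ l - 1) div (2 * n));
             C = negacyclic_bch phi beta n delta;
             d = min_dist n C
         in int (code_dim C) = int n - 2 * int m * \<lceil>real ((2 * delta - 3) * (q - 1)) / real (2 * q)\<rceil>
          \<and> bch_generator phi beta delta =
              (\<Prod>i \<in> {i. i \<le> delta - 2 \<and> i mod q \<noteq> (q - 1) div 2}. minpoly phi (beta ^ (1 + 2 * i)))
          \<and> (if delta mod q = (q + 1) div 2 then d \<ge> 2 * delta + 1 else d \<ge> 2 * delta - 1)"
proof -
  define beta where "beta = alpha ^ ((q ^ l - 1) div (2 * n))"
  have "1 \<le> q ^ m"
    using assms(2) by (simp add: odd_pos Suc_le_eq)
  then have "0 < n"
    using assms(4) by (simp add: div_greater_zero_iff)
  have "[q ^ l = 1] (mod 2 * n)"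
    using ord_works[of q "2 * n"] assms(5) by simp
  then have "2 * n dvd card (UNIV :: 'b set) - 1"
    unfolding assms(7) by (rule cong_to_1_nat)
  then have "beta ^ j = 1 \<longleftrightarrow> 2 * n dvd j" for j
    using primitive_element_root_of_unity[OF assms(8)] \<open>0 < n\<close> assms(7) by (simp add: beta_def)
  then interpret negacyclic_bch_setting phi q beta m n delta
    using assms by unfold_locales auto
  show ?thesis
    unfolding Let_def beta_def[symmetric]
    using code_dim_negacyclic_bch_eq_ceiling bch_generator_eq_prod min_dist_negacyclic_bch_cases
    by blast
qed

end
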